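(* Let $T$ be the Syracuse map on odd positive integers. For odd $n$, the valuation sequence $a_j(n)=v_2(3T^j(n)+1)$ ($j\ge 0$) decomposes uniquely into consecutive blocks $(1,\ldots,1,r_i)$, $i=1,2,\ldots$, consisting of $L_i\ge 0$ entries equal to $1$ followed by one entry $r_i\ge 2$ (a "run-compensate cycle"). Write $n^{(k)}=T^{L_1+\cdots+L_k+k}(n)$ for the value after $k$ complete cycles, and let $\mathcal N_k=\{n \text{ odd}: n^{(k)}\ge n\}$. Let $X=(L+1)\log_2 3-(L+r)$, where $L$ and $r$ are independent random variables with $\Pr(L=\ell)=2^{-(\ell+1)}$ for $\ell\ge 0$ and $\Pr(r=k)=2^{-(k-1)}$ for $k\ge 2$, let $M_X(t)=\mathbb E[e^{tX}]$, and let $I(0)=\sup_t\{-\log M_X(t)\}$ (the Cramér rate function of $X$ at $0$; numerically $I(0)\approx 0.1465$). Then for every $k\ge 1$ the upper natural density of $\mathcal N_k$ within the odd positive integers satisfies $\overline d(\mathcal N_k)\le e^{-I(0)k}$. Consequently $\overline d\bigl(\bigcap_{k\ge 1}\mathcal N_k\bigr)=0$.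
   Context: $T(n)=(3n+1)/2^{v_2(3n+1)}$ for odd $n$; $v_2$ is the $2$-adic valuation; $T^j$ is the $j$-th iterate. Natural/upper density is taken relative to the set of odd positive integers. *)

theory Defs
  imports "HOL-Analysis.Analysis" "HOL-Computational_Algebra.Primes"
begin

definition v2 :: "nat \<Rightarrow> nat" where
  "v2 m = multiplicity (2::nat) m"

definition syr :: "nat \<Rightarrow> nat" where
  "syr n = (3*n+1) div 2 ^ v2 (3*n+1)"

definition aval :: "nat \<Rightarrow> nat \<Rightarrow> nat" where
  "aval n j = v2 (3 * (syr ^^ j) n + 1)"

text \<open>Number of Syracuse steps after k complete run-compensate cycles:
  cyc_steps n k = L_1 + ... + L_k + k.  The (k+1)-st cycle ends at the
  first index j >= cyc_steps n k with a_j(n) >= 2.\<close>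
fun cyc_steps :: "nat \<Rightarrow> nat \<Rightarrow> nat" where
  "cyc_steps n 0 = 0"
| "cyc_steps n (Suc k) = Suc (LEAST j. cyc_steps n k \<le> j \<and> 2 \<le> aval n j)"

definition after_cycles :: "nat \<Rightarrow> nat \<Rightarrow> nat" where
  "after_cycles n k = (syr ^^ cyc_steps n k) n"

definition Nset :: "nat \<Rightarrow> nat set" where
  "Nset k = {n. odd n \<and> after_cycles n k \<ge> n}"

definition upper_density_odd :: "nat set \<Rightarrow> ereal" where
  "upper_density_odd A = limsup (\<lambda>N. ereal (real (card {n \<in> A. odd n \<and> n \<le> N})
                                         / real (card {n. odd n \<and> n \<le> N})))"

text \<open>M_X(t) = E[exp(t X)], X = (L+1) log_2 3 - (L+r), L, r independent,
  P(L=l) = 2^-(l+1) (l >= 0), P(r = k+2) = 2^-(k+1) (k >= 0).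
  Valued in [0,\<infinity>] (may be infinite).\<close>
definition MX :: "real \<Rightarrow> ennreal" where
  "MX t = (\<Sum>l. \<Sum>k. ennreal ((1/2) ^ (l+1) * (1/2) ^ (k+1) *
        exp (t * ((real l + 1) * log 2 3 - (real l + real (k+2))))))"

text \<open>Cramer rate at 0: I(0) = sup_t (- log M_X(t)); t with M_X(t) = \<infinity>
  contribute -\<infinity> and are omitted.\<close>
definition I0 :: real where
  "I0 = (SUP t \<in> {t. MX t < \<infinity>}. - ln (enn2real (MX t)))"

end

theory Submission
  imports Defs "HOL-Number_Theory.Cong"
begin

text \<open>
  If the first $k$ cycles of $n$ take $K$ steps with total valuation $A$, then
  $2^A n^{(k)} \le 3^K n + K 3^K 2^A$, so $n^{(k)} \ge n$ forces $3^K \ge 2^A$ unless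
  $n \le K 3^K 2^A$. When $A < D$, the cycle data only depend on $n \bmod 2^D$, and the average
  over the odd residues modulo $2^D$ of the Chernoff weight $e^{t (K \log_2 3 - A)}$ satisfies a
  recursion in the first valuation whose solution is at most $M_X(t)^k$; the residues with
  $A \ge D$ make up a fraction $O(5^k (3/4)^D)$. Letting $D \to \infty$ gives
  $\overline d(\mathcal N_k) \le M_X(t)^k$ for every $t \ge 0$ (trivially for $t < 0$), and
  optimising over $t$ gives $e^{-I(0) k}$. Since $M_X(\ln 2 / 2) < 1$, the intersection of all
  $\mathcal N_k$ has density $0$.
\<close>

lemma odd_mod_pow2:
  assumes "odd (x :: nat)" and "D \<ge> 1"
  shows "odd (x mod 2 ^ D)"
proof -
  have "x mod 2 ^ D mod 2 = x mod 2"
    using assms(2) by (simp add: mod_mod_cancel)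
  then show ?thesis
    using assms(1) by (simp add: odd_iff_mod_2_eq_one)
qed

lemma card_odd_less: "card {n. n < M \<and> odd n} = M div 2"
proof (induction M)
  case (Suc M)
  show ?case
  proof (cases "odd M")
    case True
    then have "{n. n < Suc M \<and> odd n} = insert M {n. n < M \<and> odd n}"
      using less_Suc_eq by auto
    then show ?thesis
      using Suc True by simp
  next
    case False
    then have "{n. n < Suc M \<and> odd n} = {n. n < M \<and> odd n}"
      using less_Suc_eq by auto
    then show ?thesis
      using Suc False by simp
  qed
qed simp

lemma card_odd_atMost_ge: "real N / 2 \<le> real (card {n. odd n \<and> n \<le> N})"
proof -
  have "{n. odd n \<and> n \<le> N} = {n. n < Suc N \<and> odd n}"
    by auto
  then have "card {n. odd n \<and> n \<le> N} = Suc N div 2"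
    by (simp add: card_odd_less)
  moreover have "N \<le> 2 * (Suc N div 2)"
    by presburger
  ultimately show ?thesis
    by simp
qed

lemma sum_geometric_from_2_le:
  fixes q :: real
  assumes "0 \<le> q" and "q < 1"
  shows "(\<Sum>a\<in>{2..<D}. q ^ a) \<le> q\<^sup>2 / (1 - q)"
proof (cases "D \<ge> 2")
  case True
  have "{2..<D} = {0 + 2..<(D - 2) + 2}"
    using True by (metis add_0 le_add_diff_inverse2)
  then have "(\<Sum>a\<in>{2..<D}. q ^ a) = (\<Sum>i\<in>{0..<D - 2}. q ^ (i + 2))"
    by (simp only: sum.shift_bounds_nat_ivl)
  also have "\<dots> = q\<^sup>2 * (\<Sum>i<D - 2. q ^ i)"
    by (simp add: sum_distrib_left power_add atLeast0LessThan power2_eq_square algebra_simps)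
  also have "\<dots> = q\<^sup>2 * ((1 - q ^ (D - 2)) / (1 - q))"
    using assms sum_gp_strict[of q "D - 2"] by simp
  also have "\<dots> \<le> q\<^sup>2 * (1 / (1 - q))"
    using assms by (intro mult_left_mono divide_right_mono) auto
  finally show ?thesis
    by simp
next
  case False
  then show ?thesis
    using assms by simp
qed

lemma sum_first_and_geometric_le:
  fixes f :: "nat \<Rightarrow> real"
  assumes "0 \<le> q" and "q < 1" and "0 \<le> c"
    and "0 \<le> f 1" and "\<And>a. 2 \<le> a \<Longrightarrow> f a \<le> c * q ^ a"
  shows "(\<Sum>a\<in>{1..<D}. f a) \<le> f 1 + c * (q\<^sup>2 / (1 - q))"
proof -
  have "(\<Sum>a\<in>{1..<D}. f a) \<le> f 1 + (\<Sum>a\<in>{2..<D}. f a)"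
  proof (cases "D \<ge> 2")
    case True
    then have "{1..<D} = insert 1 {2..<D}"
      by auto
    then show ?thesis
      by simp
  next
    case False
    then have "{2..<D} = {}" and "{1..<D} = {} \<or> {1..<D} = {1}"
      by auto
    then show ?thesis
      using assms(4) by (elim disjE) simp_all
  qed
  also have "(\<Sum>a\<in>{2..<D}. f a) \<le> c * (\<Sum>a\<in>{2..<D}. q ^ a)"
    unfolding sum_distrib_left using assms(5) by (intro sum_mono) simp
  also have "\<dots> \<le> c * (q\<^sup>2 / (1 - q))"
    using sum_geometric_from_2_le[OF assms(1,2)] assms(3) by (rule mult_left_mono)
  finally show ?thesis
    by simp
qed

lemma suminf_ennreal_geometric:
  fixes c x :: real
  assumes "0 < c" and "0 \<le> x"
  shows "(\<Sum>n. ennreal (c * x ^ n)) = (if x < 1 then ennreal (c / (1 - x)) else top)"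
proof (cases "x < 1")
  case True
  then have "(\<lambda>n. c * x ^ n) sums (c * (1 / (1 - x)))"
    using assms by (intro sums_mult geometric_sums) simp
  then show ?thesis
    using True assms by (subst suminf_ennreal_eq) auto
next
  case False
  have "\<not> (\<lambda>n. c * x ^ n) \<longlonglongrightarrow> 0"
  proof
    assume "(\<lambda>n. c * x ^ n) \<longlonglongrightarrow> 0"
    moreover have "c \<le> c * x ^ n" for n
      using False assms by (simp add: one_le_power)
    ultimately have "c \<le> 0"
      by (intro LIMSEQ_le_const) blast+
    then show False
      using assms(1) by simp
  qed
  then have "\<not> summable (\<lambda>n. c * x ^ n)"
    using summable_LIMSEQ_zero by blast
  then have "(\<Sum>n. ennreal (c * x ^ n)) = top"
    using assms by (intro summable_iff_suminf_neq_top) simp_all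
  then show ?thesis
    using False by simp
qed

lemma le_exp_SUP_neg_ln:
  fixes f :: "'a \<Rightarrow> real" and x :: ereal and k :: nat
  assumes "S \<noteq> {}" and "bdd_above ((\<lambda>s. - ln (f s)) ` S)" and "k \<ge> 1"
    and "\<And>s. s \<in> S \<Longrightarrow> 0 < f s" and "\<And>s. s \<in> S \<Longrightarrow> x \<le> ereal (f s ^ k)"
  shows "x \<le> ereal (exp (- (SUP s\<in>S. - ln (f s)) * real k))"
proof (cases x)
  case (real r)
  show ?thesis
  proof (cases "r \<le> 0")
    case False
    have ln_le_iff: "ln r \<le> y \<longleftrightarrow> r \<le> exp y" for y
      using False by (metis exp_le_cancel_iff exp_ln not_le)
    have "- ln (f s) \<le> - ln r / real k" if "s \<in> S" for s
    proof -
      have "f s ^ k = exp (real k * ln (f s))"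
        using assms(4)[OF that] by (simp add: exp_of_nat_mult)
      then have "ln r \<le> real k * ln (f s)"
        using assms(5)[OF that] real by (simp add: ln_le_iff)
      then show ?thesis
        using assms(3) by (simp add: field_simps)
    qed
    then have "(SUP s\<in>S. - ln (f s)) \<le> - ln r / real k"
      using assms(1) by (intro cSUP_least) auto
    then have "ln r \<le> - (SUP s\<in>S. - ln (f s)) * real k"
      using assms(3) by (simp add: field_simps)
    then show ?thesis
      using real by (simp add: ln_le_iff)
  qed (simp add: real order_trans[OF _ less_imp_le[OF exp_gt_zero]])
next
  case PInf
  then show ?thesis
    using assms(1,5) by force
qed simp

lemma ereal_le_0_if_le_pow:
  fixes x :: ereal and q :: real
  assumes "0 \<le> q" and "q < 1" and "\<And>k. k \<ge> 1 \<Longrightarrow> x \<le> ereal (q ^ k)"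
  shows "x \<le> 0"
proof -
  have "(\<lambda>k. ereal (q ^ k)) \<longlonglongrightarrow> ereal 0"
    unfolding lim_ereal using assms(1,2) by (intro LIMSEQ_power_zero) simp
  then show ?thesis
    using assms(3) by (intro tendsto_le[OF trivial_limit_sequentially, of "\<lambda>k. ereal (q ^ k)"] tendsto_const)
      (auto simp: eventually_sequentially zero_ereal_def)
qed

lemma log2_3_less_2: "log 2 3 < (2::real)"
proof -
  have "log 2 3 < log 2 (4::real)"
    by (subst log_less_cancel_iff) auto
  also have "log 2 (4::real) = 2"
    using log_pow_cancel[of "2::real" 2] by simp
  finally show ?thesis .
qed

lemma log2_3_ge: "3 / 2 \<le> log 2 (3::real)"
proof -
  have "log 2 (8::real) \<le> log 2 (9::real)"
    by (subst log_le_cancel_iff) auto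
  moreover have "log 2 (8::real) = 3"
    using log_pow_cancel[of "2::real" 3] by simp
  moreover have "log 2 (9::real) = 2 * log 2 3"
    using log_nat_power[of "3::real" 2 2] by simp
  ultimately show ?thesis
    by simp
qed

section \<open>The Syracuse map\<close>

lemma pow_v2_dvd: "2 ^ v2 m dvd m"
  unfolding v2_def by (rule multiplicity_dvd)

lemma pow_Suc_v2_not_dvd: "m > 0 \<Longrightarrow> \<not> 2 ^ Suc (v2 m) dvd m"
  unfolding v2_def
  using power_dvd_iff_le_multiplicity[where p = "2::nat" and x = m and n = "Suc (multiplicity 2 m)"]
  by simp

lemma v2_eqI: "2 ^ a dvd m \<Longrightarrow> \<not> 2 ^ Suc a dvd m \<Longrightarrow> v2 m = a"
  unfolding v2_def by (rule multiplicity_eqI)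

lemma aval_0: "aval n 0 = v2 (3 * n + 1)"
  unfolding aval_def by simp

lemma pow_aval_mult_syr: "2 ^ aval n 0 * syr n = 3 * n + 1"
  unfolding syr_def aval_0 using pow_v2_dvd[of "3 * n + 1"] by simp

lemma odd_syr: "odd (syr n)"
proof
  assume "even (syr n)"
  then have "2 ^ Suc (aval n 0) dvd 3 * n + 1"
    by (metis pow_aval_mult_syr mult_dvd_mono power_Suc2 dvd_refl)
  then show False
    using pow_Suc_v2_not_dvd[of "3 * n + 1"] by (simp add: aval_0)
qed

lemma odd_funpow_syr: "odd n \<Longrightarrow> odd ((syr ^^ j) n)"
  by (cases j) (auto simp: odd_syr)

lemma aval_funpow_syr: "aval ((syr ^^ i) n) j = aval n (i + j)"
  unfolding aval_def by (metis add.commute comp_apply funpow_add)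

lemma aval_Suc: "aval n (Suc j) = aval (syr n) j"
  unfolding aval_def by (simp add: funpow_Suc_right del: funpow.simps)

lemma aval_ge_1:
  assumes "odd n"
  shows "1 \<le> aval n j"
proof -
  have "2 ^ 1 dvd 3 * (syr ^^ j) n + 1"
    using odd_funpow_syr[OF assms] by simp
  then show ?thesis
    unfolding aval_def v2_def
    using power_dvd_iff_le_multiplicity[where p = "2::nat" and x = "3 * (syr ^^ j) n + 1" and n = 1]
    by simp
qed

lemma funpow_syr_ones:
  assumes "odd m" and "\<forall>i<j. aval m i = 1"
  shows "2 ^ j * ((syr ^^ j) m + 1) = 3 ^ j * (m + 1)"
  using assms(2)
proof (induction j)
  case 0
  then show ?case by simp
next
  case (Suc j)
  have "aval ((syr ^^ j) m) 0 = 1"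
    using Suc.prems aval_funpow_syr[of j m 0] by simp
  then have "2 * ((syr ^^ Suc j) m + 1) = 3 * ((syr ^^ j) m + 1)"
    using pow_aval_mult_syr[of "(syr ^^ j) m"] by simp
  then have "2 ^ Suc j * ((syr ^^ Suc j) m + 1) = 3 * (2 ^ j * ((syr ^^ j) m + 1))"
    by (metis mult.assoc mult.left_commute power_Suc)
  also have "\<dots> = 3 ^ Suc j * (m + 1)"
    using Suc by simp
  finally show ?case .
qed

text \<open>A run of $j$ ones starting at $m$ forces $2^j \mid m + 1$, so runs are finite.\<close>
lemma ex_aval_ge_2:
  assumes "odd m"
  shows "\<exists>i. 2 \<le> aval m i"
proof (rule ccontr)
  assume "\<nexists>i. 2 \<le> aval m i"
  then have "\<forall>i<m + 1. aval m i = 1"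
    using aval_ge_1[OF assms] by (metis le_antisym not_less_eq_eq numeral_2_eq_2 One_nat_def)
  then have "2 ^ (m + 1) dvd 3 ^ (m + 1) * (m + 1)"
    using funpow_syr_ones[OF assms] by (metis dvd_triv_left)
  moreover have "coprime ((2::nat) ^ (m + 1)) (3 ^ (m + 1))"
    by simp
  ultimately have "2 ^ (m + 1) dvd m + 1"
    using coprime_dvd_mult_right_iff by blast
  then have "2 ^ (m + 1) \<le> m + 1"
    by (simp add: dvd_imp_le)
  then show False
    using less_exp[of "m + 1"] by simp
qed

lemma ex_aval_ge_2_beyond:
  assumes "odd n"
  shows "\<exists>j\<ge>c. 2 \<le> aval n j"
proof -
  obtain i where "2 \<le> aval ((syr ^^ c) n) i"
    using ex_aval_ge_2 odd_funpow_syr[OF assms] by blast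
  then show ?thesis
    using aval_funpow_syr[of c n i] by (intro exI[of _ "c + i"]) simp
qed

lemma funpow_syr_le:
  fixes n :: nat
  defines "A j \<equiv> \<Sum>i<j. aval n i"
  shows "2 ^ A j * (syr ^^ j) n \<le> 3 ^ j * n + j * 3 ^ j * 2 ^ A j"
proof (induction j)
  case (Suc j)
  define x where "x = (syr ^^ j) n"
  have A: "A (Suc j) = A j + aval x 0" and "A j \<le> A (Suc j)"
    using aval_funpow_syr[of j n 0] by (simp_all add: A_def x_def)
  then have pow_le: "(2::nat) ^ A j \<le> 2 ^ A (Suc j)"
    by simp
  have "2 ^ A (Suc j) * (syr ^^ Suc j) n = 2 ^ A j * (2 ^ aval x 0 * syr x)"
    by (simp add: A x_def power_add)
  also have "\<dots> = 3 * (2 ^ A j * x) + 2 ^ A j"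
    by (simp only: pow_aval_mult_syr) (simp add: algebra_simps)
  also have "\<dots> \<le> 3 * (3 ^ j * n + j * 3 ^ j * 2 ^ A j) + 2 ^ A j"
    using Suc by (simp add: x_def)
  also have "\<dots> = 3 ^ Suc j * n + j * 3 ^ Suc j * 2 ^ A j + 2 ^ A j"
    by (simp add: algebra_simps)
  also have "\<dots> \<le> 3 ^ Suc j * n + j * 3 ^ Suc j * 2 ^ A (Suc j) + 3 ^ Suc j * 2 ^ A (Suc j)"
    using pow_le mult_le_mono[OF _ pow_le, of 1 "3 ^ Suc j"]
    by (intro add_mono mult_le_mono2) simp_all
  finally show ?case
    by (simp add: algebra_simps)
qed (simp add: A_def)

section \<open>Run-compensate cycles\<close>

lemma cyc_steps_Suc_shift:
  assumes "odd n" and "cyc_steps n k = Suc (cyc_steps (syr n) k')"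
  shows "cyc_steps n (Suc k) = Suc (cyc_steps (syr n) (Suc k'))"
proof -
  let ?P = "\<lambda>j. cyc_steps n k \<le> j \<and> 2 \<le> aval n j"
  obtain j where "?P j"
    using ex_aval_ge_2_beyond[OF assms(1)] by blast
  moreover have "\<not> ?P 0"
    using assms(2) by simp
  ultimately have "(LEAST j. ?P j) = Suc (LEAST j. ?P (Suc j))"
    by (rule Least_Suc)
  then show ?thesis
    using assms(2) by (simp add: aval_Suc)
qed

lemma cyc_steps_Suc_if_aval_eq_1:
  assumes "odd n" and "aval n 0 = 1"
  shows "cyc_steps n (Suc k) = Suc (cyc_steps (syr n) (Suc k))"
proof (induction k)
  case 0
  let ?P = "\<lambda>j. 2 \<le> aval n j"
  obtain j where "?P j"
    using ex_aval_ge_2[OF assms(1)] by blast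
  moreover have "\<not> ?P 0"
    using assms(2) by simp
  ultimately have "(LEAST j. ?P j) = Suc (LEAST j. ?P (Suc j))"
    by (rule Least_Suc)
  then show ?case
    by (simp add: aval_Suc)
next
  case (Suc k)
  then show ?case
    using cyc_steps_Suc_shift[OF assms(1)] by blast
qed

lemma cyc_steps_Suc_if_aval_ge_2:
  assumes "odd n" and "2 \<le> aval n 0"
  shows "cyc_steps n (Suc k) = Suc (cyc_steps (syr n) k)"
proof (induction k)
  case 0
  have "(LEAST j. 2 \<le> aval n j) = 0"
    using assms(2) by (intro Least_eq_0)
  then show ?case
    by simp
next
  case (Suc k)
  then show ?case
    using cyc_steps_Suc_shift[OF assms(1)] by blast
qed

text \<open>A step of valuation $1$ continues the current cycle, a step of larger valuation
  closes it.\<close>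
definition cycles_after :: "nat \<Rightarrow> nat \<Rightarrow> nat" where
  "cycles_after a k = (if a = 1 then k else k - 1)"

lemma cyc_steps_rec:
  assumes "odd n" and "k \<ge> 1"
  shows "cyc_steps n k = Suc (cyc_steps (syr n) (cycles_after (aval n 0) k))"
  using cyc_steps_Suc_if_aval_eq_1[OF assms(1)] cyc_steps_Suc_if_aval_ge_2[OF assms(1)]
    aval_ge_1[OF assms(1), of 0] assms(2)
  by (cases k) (auto simp: cycles_after_def le_Suc_eq)

definition cyc_val :: "nat \<Rightarrow> nat \<Rightarrow> nat" where
  "cyc_val n k = (\<Sum>j<cyc_steps n k. aval n j)"

lemma cyc_val_0 [simp]: "cyc_val n 0 = 0"
  unfolding cyc_val_def by simp

lemma cyc_val_rec:
  assumes "odd n" and "k \<ge> 1"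
  shows "cyc_val n k = aval n 0 + cyc_val (syr n) (cycles_after (aval n 0) k)"
  unfolding cyc_val_def cyc_steps_rec[OF assms] sum.lessThan_Suc_shift aval_Suc ..

lemma cyc_steps_le_cyc_val:
  assumes "odd n"
  shows "cyc_steps n k \<le> cyc_val n k"
proof -
  have "(\<Sum>j<cyc_steps n k. 1) \<le> cyc_val n k"
    unfolding cyc_val_def by (intro sum_mono aval_ge_1[OF assms])
  then show ?thesis
    by simp
qed

lemma aval_le_cyc_val: "odd n \<Longrightarrow> k \<ge> 1 \<Longrightarrow> aval n 0 \<le> cyc_val n k"
  using cyc_val_rec by fastforce

lemma syr_mod_pow2:
  assumes "x mod 2 ^ e = y mod 2 ^ e" and "aval x 0 < e"
  shows "aval y 0 = aval x 0"
    and "syr x mod 2 ^ (e - aval x 0) = syr y mod 2 ^ (e - aval x 0)"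
proof -
  define a where "a = aval x 0"
  have mod3: "(3 * x + 1) mod 2 ^ e = (3 * y + 1) mod 2 ^ e"
    using assms(1) by (metis mod_add_cong mod_mult_right_eq)
  have dvd_e: "(2::nat) ^ a dvd 2 ^ e" "(2::nat) ^ Suc a dvd 2 ^ e"
    using assms(2) unfolding a_def by (intro le_imp_power_dvd, simp)+
  have "2 ^ a dvd 3 * x + 1" "\<not> 2 ^ Suc a dvd 3 * x + 1"
    using pow_v2_dvd pow_Suc_v2_not_dvd by (simp_all add: a_def aval_0)
  then have "2 ^ a dvd 3 * y + 1" "\<not> 2 ^ Suc a dvd 3 * y + 1"
    using dvd_e mod3 by (metis dvd_mod_iff)+
  then show ay: "aval y 0 = aval x 0"
    unfolding aval_0 a_def[unfolded aval_0] by (rule v2_eqI)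
  have e: "(2::nat) ^ e = 2 ^ a * 2 ^ (e - a)"
    using assms(2) by (simp add: a_def flip: power_add)
  have "(2 ^ a * syr x) mod (2 ^ a * 2 ^ (e - a)) = (2 ^ a * syr y) mod (2 ^ a * 2 ^ (e - a))"
    using mod3 pow_aval_mult_syr[of x] pow_aval_mult_syr[of y] ay e by (simp add: a_def)
  then show "syr x mod 2 ^ (e - aval x 0) = syr y mod 2 ^ (e - aval x 0)"
    by (simp only: mod_mult_mult1 a_def) simp
qed

lemma cycles_mod_pow2:
  assumes "odd x" and "odd y" and "x mod 2 ^ e = y mod 2 ^ e" and "cyc_val x k < e"
  shows "cyc_steps y k = cyc_steps x k \<and> cyc_val y k = cyc_val x k"
  using assms
proof (induction e arbitrary: k x y rule: less_induct)
  case (less e)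
  show ?case
  proof (cases "k = 0")
    case False
    then have k: "k \<ge> 1"
      by simp
    define a where "a = aval x 0"
    have val_x: "cyc_val x k = a + cyc_val (syr x) (cycles_after a k)"
      using cyc_val_rec[OF less.prems(1) k] by (simp add: a_def)
    then have "aval x 0 < e"
      using less.prems(4) by (simp add: a_def)
    note step = syr_mod_pow2[OF less.prems(3) this]
    have "e - a < e"
      using aval_ge_1[OF less.prems(1), of 0] step less.prems(4) val_x by (simp add: a_def)
    moreover have "cyc_val (syr x) (cycles_after a k) < e - a"
      using val_x less.prems(4) by simp
    ultimately have IH: "cyc_steps (syr y) (cycles_after a k) = cyc_steps (syr x) (cycles_after a k)
        \<and> cyc_val (syr y) (cycles_after a k) = cyc_val (syr x) (cycles_after a k)"
      using less.IH[OF _ odd_syr odd_syr step(2)[folded a_def]] by blast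
    have "cyc_steps y k = Suc (cyc_steps (syr y) (cycles_after a k))"
      "cyc_val y k = a + cyc_val (syr y) (cycles_after a k)"
      using cyc_steps_rec[OF less.prems(2) k] cyc_val_rec[OF less.prems(2) k] step(1)
      by (simp_all add: a_def)
    moreover have "cyc_steps x k = Suc (cyc_steps (syr x) (cycles_after a k))"
      using cyc_steps_rec[OF less.prems(1) k] by (simp add: a_def)
    ultimately show ?thesis
      using IH val_x by simp
  qed simp
qed

lemma cycles_mod_pow2_trunc:
  assumes "odd x" and "D \<ge> 1"
  shows "cyc_val (x mod 2 ^ D) k < D \<longleftrightarrow> cyc_val x k < D"
    and "cyc_val x k < D \<Longrightarrow>
      cyc_steps (x mod 2 ^ D) k = cyc_steps x k \<and> cyc_val (x mod 2 ^ D) k = cyc_val x k"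
proof -
  have odd: "odd (x mod 2 ^ D)"
    using odd_mod_pow2[OF assms] .
  have "x mod 2 ^ D = (x mod 2 ^ D) mod 2 ^ D"
    by simp
  note cyc = cycles_mod_pow2[OF assms(1) odd this] cycles_mod_pow2[OF odd assms(1) this[symmetric]]
  show "cyc_val (x mod 2 ^ D) k < D \<longleftrightarrow> cyc_val x k < D"
    using cyc by (metis (no_types))
  show "cyc_val x k < D \<Longrightarrow>
      cyc_steps (x mod 2 ^ D) k = cyc_steps x k \<and> cyc_val (x mod 2 ^ D) k = cyc_val x k"
    using cyc(1) .
qed

section \<open>Sums over odd residues\<close>

definition odd_residues :: "nat \<Rightarrow> nat set" where
  "odd_residues D = {\<rho>. \<rho> < 2 ^ D \<and> odd \<rho>}"

lemma finite_odd_residues [simp]: "finite (odd_residues D)"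
  unfolding odd_residues_def by simp

lemma odd_residues_0 [simp]: "odd_residues 0 = {}"
  unfolding odd_residues_def by (auto dest: odd_pos)

lemma card_odd_residues: "real (card (odd_residues D)) \<le> 2 ^ D / 2"
proof -
  have "real (2 * card (odd_residues D)) \<le> 2 ^ D"
    unfolding odd_residues_def card_odd_less
    by (metis of_nat_le_iff of_nat_numeral of_nat_power div_times_less_eq_dividend mult.commute)
  then show ?thesis
    by simp
qed

lemma mod_pow2_3x1_inj:
  assumes "x < 2 ^ D" and "y < (2::nat) ^ D" and "(3 * x + 1) mod 2 ^ D = (3 * y + 1) mod 2 ^ D"
  shows "x = y"
proof -
  have "[3 * x = 3 * y] (mod 2 ^ D)"
    using assms(3) cong_add_rcancel_nat[of "3 * x" 1 "3 * y" "2 ^ D"] by (simp add: cong_def)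
  then have "[x = y] (mod 2 ^ D)"
    by (simp add: cong_mult_lcancel_nat)
  then show ?thesis
    using assms(1,2) cong_less_imp_eq_nat by blast
qed

lemma pow_aval_mult_syr_mod:
  assumes "aval x 0 \<le> D"
  shows "(3 * x + 1) mod 2 ^ D = 2 ^ aval x 0 * (syr x mod 2 ^ (D - aval x 0))"
proof -
  have "(2::nat) ^ D = 2 ^ aval x 0 * 2 ^ (D - aval x 0)"
    using assms by (simp flip: power_add)
  then show ?thesis
    by (metis pow_aval_mult_syr mod_mult_mult1)
qed

text \<open>By the previous lemma and since $3$ is invertible modulo $2^D$, the map
  $\rho \mapsto T(\rho) \bmod 2^{D-a}$ is injective on the residues of valuation $a$.\<close>
lemma sum_residues_syr_le:
  fixes g :: "nat \<Rightarrow> real"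
  assumes "a < D" and "\<And>\<sigma>. 0 \<le> g \<sigma>"
  shows "(\<Sum>\<rho>\<in>{\<rho>\<in>odd_residues D. aval \<rho> 0 = a}. g (syr \<rho> mod 2 ^ (D - a)))
    \<le> (\<Sum>\<sigma>\<in>odd_residues (D - a). g \<sigma>)"
proof -
  define S where "S = {\<rho>\<in>odd_residues D. aval \<rho> 0 = a}"
  define h where "h \<rho> = syr \<rho> mod 2 ^ (D - a)" for \<rho>
  have "inj_on h S"
  proof
    fix x y
    assume "x \<in> S" "y \<in> S" "h x = h y"
    then show "x = y"
      using pow_aval_mult_syr_mod[of x D] pow_aval_mult_syr_mod[of y D] assms(1)
        mod_pow2_3x1_inj[of x D y]
      by (simp add: S_def h_def odd_residues_def)
  qed
  moreover have "h ` S \<subseteq> odd_residues (D - a)"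
    using assms(1) odd_mod_pow2[OF odd_syr] by (auto simp: h_def odd_residues_def)
  ultimately have "(\<Sum>\<rho>\<in>S. g (h \<rho>)) \<le> (\<Sum>\<sigma>\<in>odd_residues (D - a). g \<sigma>)"
    using assms(2) sum.reindex[of h S g] sum_mono2[of "odd_residues (D - a)" "h ` S" g] by simp
  then show ?thesis
    by (simp add: S_def h_def)
qed

lemma card_residues_aval_ge_le_1: "card {\<rho>\<in>odd_residues D. D \<le> aval \<rho> 0} \<le> 1"
proof -
  have "x = y" if "x \<in> {\<rho>\<in>odd_residues D. D \<le> aval \<rho> 0}"
    and "y \<in> {\<rho>\<in>odd_residues D. D \<le> aval \<rho> 0}" for x y
  proof -
    have "2 ^ D dvd 3 * z + 1" if "D \<le> aval z 0" for z
      using that pow_v2_dvd[of "3 * z + 1"] by (metis aval_0 le_imp_power_dvd dvd_trans)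
    then have "(3 * x + 1) mod 2 ^ D = (3 * y + 1) mod 2 ^ D"
      using that by simp
    then show "x = y"
      using that mod_pow2_3x1_inj unfolding odd_residues_def by blast
  qed
  then show ?thesis
    by (simp add: card_le_Suc0_iff_eq)
qed

lemma sum_residues_by_aval:
  fixes f :: "nat \<Rightarrow> real"
  assumes "D \<ge> 1"
  shows "(\<Sum>\<rho>\<in>odd_residues D. f \<rho>) = (\<Sum>\<rho>\<in>{\<rho>\<in>odd_residues D. D \<le> aval \<rho> 0}. f \<rho>)
    + (\<Sum>a\<in>{1..<D}. \<Sum>\<rho>\<in>{\<rho>\<in>odd_residues D. aval \<rho> 0 = a}. f \<rho>)"
proof -
  define g where "g \<rho> = min (aval \<rho> 0) D" for \<rho>
  have "g ` odd_residues D \<subseteq> insert D {1..<D}"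
    using aval_ge_1 by (auto simp: g_def odd_residues_def)
  then have "(\<Sum>\<rho>\<in>odd_residues D. f \<rho>)
      = (\<Sum>b\<in>insert D {1..<D}. \<Sum>\<rho>\<in>{\<rho>\<in>odd_residues D. g \<rho> = b}. f \<rho>)"
    by (simp add: sum.group)
  also have "\<dots> = (\<Sum>\<rho>\<in>{\<rho>\<in>odd_residues D. g \<rho> = D}. f \<rho>)
      + (\<Sum>b\<in>{1..<D}. \<Sum>\<rho>\<in>{\<rho>\<in>odd_residues D. g \<rho> = b}. f \<rho>)"
    by simp
  also have "{\<rho>\<in>odd_residues D. g \<rho> = D} = {\<rho>\<in>odd_residues D. D \<le> aval \<rho> 0}"
    by (auto simp: g_def)
  also have "(\<Sum>b\<in>{1..<D}. \<Sum>\<rho>\<in>{\<rho>\<in>odd_residues D. g \<rho> = b}. f \<rho>)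
      = (\<Sum>a\<in>{1..<D}. \<Sum>\<rho>\<in>{\<rho>\<in>odd_residues D. aval \<rho> 0 = a}. f \<rho>)"
    by (intro sum.cong refl arg_cong[where f = "\<lambda>A. sum f A"]) (auto simp: g_def)
  finally show ?thesis .
qed

lemma inj_on_mult_add: "inj_on (\<lambda>(q, r). q * m + r :: nat) (UNIV \<times> {..<m})"
proof (rule inj_onI, clarify)
  fix q r q' r' :: nat
  assume "r < m" "r' < m" and eq: "q * m + r = q' * m + r'"
  have "(q * m + r) div m = q" "(q * m + r) mod m = r"
    and "(q' * m + r') div m = q'" "(q' * m + r') mod m = r'"
    using \<open>r < m\<close> \<open>r' < m\<close> by simp_all
  then show "q = q' \<and> r = r'"
    using eq by metis
qed

lemma sum_odd_le_periodic:
  fixes f :: "nat \<Rightarrow> real"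
  assumes "D \<ge> 1" and "\<And>n. 0 \<le> f n" and "\<And>n. odd n \<Longrightarrow> f (n mod 2 ^ D) = f n"
  shows "(\<Sum>n | odd n \<and> n \<le> N. f n) \<le> real (N div 2 ^ D + 1) * (\<Sum>\<rho>\<in>odd_residues D. f \<rho>)"
proof -
  define Q where "Q = {..N div 2 ^ D}"
  define h where "h = (\<lambda>(q :: nat, \<rho> :: nat). q * 2 ^ D + \<rho>)"
  have "{n. odd n \<and> n \<le> N} \<subseteq> h ` (Q \<times> odd_residues D)"
  proof
    fix n
    assume n: "n \<in> {n. odd n \<and> n \<le> N}"
    then have "(n div 2 ^ D, n mod 2 ^ D) \<in> Q \<times> odd_residues D"
      using odd_mod_pow2[of n D] assms(1) by (simp add: Q_def odd_residues_def div_le_mono)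
    moreover have "n = h (n div 2 ^ D, n mod 2 ^ D)"
      unfolding h_def by (simp add: div_mult_mod_eq)
    ultimately show "n \<in> h ` (Q \<times> odd_residues D)"
      by blast
  qed
  moreover have "inj_on h (Q \<times> odd_residues D)"
    unfolding h_def by (rule inj_on_subset[OF inj_on_mult_add[of "2 ^ D"]]) (auto simp: odd_residues_def)
  ultimately have "(\<Sum>n | odd n \<and> n \<le> N. f n) \<le> (\<Sum>x\<in>Q \<times> odd_residues D. f (h x))"
    using assms(2) sum_mono2[of "h ` (Q \<times> odd_residues D)" "{n. odd n \<and> n \<le> N}" f]
      sum.reindex[of h "Q \<times> odd_residues D" f]
    by (simp add: Q_def)
  also have "\<dots> = (\<Sum>q\<in>Q. \<Sum>\<rho>\<in>odd_residues D. f (h (q, \<rho>)))"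
    by (simp add: sum.cartesian_product)
  also have "\<dots> = (\<Sum>q\<in>Q. \<Sum>\<rho>\<in>odd_residues D. f \<rho>)"
  proof (intro sum.cong refl)
    fix q \<rho>
    assume "\<rho> \<in> odd_residues D"
    then have "odd (q * 2 ^ D + \<rho>)" and "(q * 2 ^ D + \<rho>) mod 2 ^ D = \<rho>"
      using assms(1) by (simp_all add: odd_residues_def)
    then show "f (h (q, \<rho>)) = f \<rho>"
      using assms(3) unfolding h_def by (metis case_prod_conv)
  qed
  also have "\<dots> = real (N div 2 ^ D + 1) * (\<Sum>\<rho>\<in>odd_residues D. f \<rho>)"
    by (simp add: Q_def)
  finally show ?thesis .
qed

section \<open>The moment generating function\<close>

definition mgf_finite :: "real \<Rightarrow> bool" where
  "mgf_finite t \<longleftrightarrow> exp (- t) < 2 \<and> exp (t * log 2 3) * exp (- t) < 2"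

definition mgf :: "real \<Rightarrow> real" where
  "mgf t = exp (t * log 2 3) * exp (- t) ^ 2
     / ((2 - exp (- t)) * (2 - exp (t * log 2 3) * exp (- t)))"

lemma mgf_pos: "mgf_finite t \<Longrightarrow> 0 < mgf t"
  by (simp add: mgf_def mgf_finite_def)

text \<open>The renewal equation of a cycle: with probability $1/2$ it continues with a step of
  valuation $1$, otherwise it ends with a step of valuation $a \<ge> 2$ (probability $2^{-a}$).\<close>
lemma mgf_renewal:
  fixes E u :: real
  assumes "u < 2" and "E * u < 2"
  defines "m \<equiv> E * u\<^sup>2 / ((2 - u) * (2 - E * u))"
  shows "E * u / 2 * m + E * ((u / 2)\<^sup>2 / (1 - u / 2)) = m"
proof -
  have d1: "2 - u > 0" and d2: "2 - E * u > 0"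
    using assms by auto
  have "m = E * u\<^sup>2 / (2 - u) / (2 - E * u)"
    unfolding m_def by (simp add: divide_divide_eq_left)
  then have h1: "m * (2 - E * u) = E * u\<^sup>2 / (2 - u)"
    using d2 by simp
  have h2: "E * ((u / 2)\<^sup>2 / (1 - u / 2)) = E * u\<^sup>2 / (2 * (2 - u))"
    using d1 by (simp add: field_simps power2_eq_square)
  have "E * u / 2 * m + E * ((u / 2)\<^sup>2 / (1 - u / 2)) = E * u / 2 * m + m * (2 - E * u) / 2"
    using h1 h2 by simp
  also have "\<dots> = m"
    by (simp add: field_simps)
  finally show ?thesis .
qed

lemma exp_step_weight: "exp (t * (log 2 3 - real a)) = exp (t * log 2 3) * exp (- t) ^ a"
  by (simp add: algebra_simps flip: exp_of_nat_mult exp_add)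

lemma MX_eq_product:
  fixes t :: real
  defines "E \<equiv> exp (t * log 2 3)" and "u \<equiv> exp (- t)"
  shows "MX t = (\<Sum>l. ennreal (E / 2 * (E * u / 2) ^ l)) * (\<Sum>k. ennreal (u\<^sup>2 / 2 * (u / 2) ^ k))"
proof -
  have E: "0 < E" and u: "0 < u"
    by (simp_all add: E_def u_def)
  have summand: "(1 / 2) ^ (l + 1) * (1 / 2) ^ (k + 1)
        * exp (t * ((real l + 1) * log 2 3 - (real l + real (k + 2))))
      = E / 2 * (E * u / 2) ^ l * (u\<^sup>2 / 2 * (u / 2) ^ k)" for l k
  proof -
    have "t * ((real l + 1) * log 2 3 - (real l + real (k + 2)))
        = real (l + 1) * (t * log 2 3) + real (l + k + 2) * (- t)"
      by (simp add: algebra_simps)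
    then have "exp (t * ((real l + 1) * log 2 3 - (real l + real (k + 2)))) = E ^ (l + 1) * u ^ (l + k + 2)"
      by (simp only: E_def u_def exp_add exp_of_nat_mult)
    then show ?thesis
      by (simp add: power_add power_mult_distrib power_divide field_simps power2_eq_square)
  qed
  have split: "ennreal (E / 2 * (E * u / 2) ^ l * (u\<^sup>2 / 2 * (u / 2) ^ k))
      = ennreal (E / 2 * (E * u / 2) ^ l) * ennreal (u\<^sup>2 / 2 * (u / 2) ^ k)" for l k
    using E u by (intro ennreal_mult) auto
  have "MX t = (\<Sum>l. \<Sum>k. ennreal (E / 2 * (E * u / 2) ^ l) * ennreal (u\<^sup>2 / 2 * (u / 2) ^ k))"
    unfolding MX_def summand split ..
  then show ?thesis
    by simp
qed

lemma MX_eq: "MX t = (if mgf_finite t then ennreal (mgf t) else top)"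
proof -
  define E where "E = exp (t * log 2 3)"
  define u where "u = exp (- t)"
  have E: "0 < E" and u: "0 < u"
    by (simp_all add: E_def u_def)
  have "MX t = (if E * u / 2 < 1 then ennreal (E / 2 / (1 - E * u / 2)) else top)
      * (if u / 2 < 1 then ennreal (u\<^sup>2 / 2 / (1 - u / 2)) else top)"
    unfolding MX_eq_product E_def[symmetric] u_def[symmetric] using E u
    by (simp only: suminf_ennreal_geometric half_gt_zero mult_pos_pos zero_less_power
        less_imp_le divide_nonneg_pos zero_less_numeral)
  also have "\<dots> = (if mgf_finite t then ennreal (mgf t) else top)"
  proof (cases "mgf_finite t")
    case True
    then have "E * u < 2" "u < 2"
      by (simp_all add: mgf_finite_def E_def u_def)
    moreover have "mgf t = E * u\<^sup>2 / ((2 - u) * (2 - E * u))"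
      unfolding mgf_def E_def u_def ..
    ultimately have "E / 2 / (1 - E * u / 2) * (u\<^sup>2 / 2 / (1 - u / 2)) = mgf t"
      by (simp add: field_simps power2_eq_square)
    then show ?thesis
      using True E u \<open>E * u < 2\<close> \<open>u < 2\<close> by (simp flip: ennreal_mult)
  next
    case False
    then have "\<not> E * u / 2 < 1 \<or> \<not> u / 2 < 1"
      by (auto simp: mgf_finite_def E_def u_def)
    moreover have "0 < E / 2 / (1 - E * u / 2)" if "E * u / 2 < 1"
      using that E by simp
    moreover have "0 < u\<^sup>2 / 2 / (1 - u / 2)" if "u / 2 < 1"
      using that u by simp
    ultimately show ?thesis
      using False by (auto simp: ennreal_top_mult ennreal_mult_top)
  qed
  finally show ?thesis .
qed

lemma one_le_mgf_if_neg:
  assumes "mgf_finite t" and "t < 0"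
  shows "1 \<le> mgf t"
proof -
  define u where "u = exp (- t)"
  define w where "w = exp (t * log 2 3) * exp (- t)"
  have u: "0 < u" "u < 2" and w: "0 < w" "w < 2"
    using assms(1) by (simp_all add: u_def w_def mgf_finite_def)
  have "w * u = exp (t * log 2 3 + (- t) + (- t))"
    unfolding w_def u_def by (simp only: exp_add)
  also have "t * log 2 3 + (- t) + (- t) = t * (log 2 3 - 2)"
    by (simp add: algebra_simps)
  finally have "w * u = exp (t * (log 2 3 - 2))" .
  moreover have "0 \<le> t * (log 2 3 - 2)"
    using assms(2) log2_3_less_2 by (intro mult_nonpos_nonpos) auto
  ultimately have wu: "1 \<le> w * u"
    by simp
  have "(u + w)\<^sup>2 - 4 * (w * u) = (u - w)\<^sup>2"
    by (simp add: power2_eq_square algebra_simps)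
  then have "4 \<le> (u + w)\<^sup>2"
    using wu zero_le_power2[of "u - w"] by linarith
  then have "2 \<le> u + w"
    using u w power_strict_mono[of "u + w" 2 2] by (cases "2 \<le> u + w") simp_all
  then have "(2 - u) * (2 - w) \<le> w * u"
    by (simp add: algebra_simps)
  moreover have "mgf t = w * u / ((2 - u) * (2 - w))"
    by (simp add: mgf_def u_def w_def power2_eq_square mult.assoc)
  ultimately show ?thesis
    using u w by simp
qed

text \<open>On the finiteness domain, $t \ge 0$ forces $t < 2 \ln 2$, hence $e^{-t} > 1/4$.\<close>
lemma mgf_ge_one_eighth:
  assumes "mgf_finite t"
  shows "1 / 8 \<le> mgf t"
proof (cases "t < 0")
  case True
  then show ?thesis
    using one_le_mgf_if_neg[OF assms] by simp
next
  case False
  define u where "u = exp (- t)"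
  define w where "w = exp (t * log 2 3) * exp (- t)"
  have w_exp: "w = exp (t * (log 2 3 - 1))"
    by (simp add: w_def algebra_simps flip: exp_add)
  have u: "u \<le> 1"
    using False by (simp add: u_def)
  have "w < 2"
    using assms by (simp add: mgf_finite_def w_def)
  moreover have "1 \<le> w"
    using False log2_3_ge by (simp add: w_exp)
  ultimately have w: "1 \<le> w" "w < 2"
    by simp_all
  have "t * (log 2 3 - 1) < ln 2"
    using w(2) w_exp by (metis exp_less_cancel_iff exp_ln zero_less_numeral)
  moreover have "t * (1 / 2) \<le> t * (log 2 3 - 1)"
    using False log2_3_ge by (intro mult_left_mono) simp_all
  ultimately have "exp (- 2 * ln 2) < u"
    by (simp add: u_def)
  moreover have "exp (- 2 * ln (2::real)) = 1 / 4"
    by (simp add: exp_minus exp_of_nat_mult[of 2, simplified] power2_eq_square)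
  ultimately have "1 / 4 < u"
    by simp
  moreover have "u \<le> w * u"
    using mult_right_mono[OF w(1), of u] by (simp add: u_def)
  ultimately have wu: "1 / 4 < w * u"
    by linarith
  have "(2 - u) * (2 - w) \<le> 2 - u"
    using mult_left_mono[of "2 - w" 1 "2 - u"] u w by simp
  moreover have "0 < u"
    by (simp add: u_def)
  ultimately have "(2 - u) * (2 - w) \<le> 2"
    by linarith
  moreover have "0 < (2 - u) * (2 - w)"
    using u w by simp
  ultimately have "w * u / 2 \<le> w * u / ((2 - u) * (2 - w))"
    using wu by (intro divide_left_mono) simp_all
  moreover have "mgf t = w * u / ((2 - u) * (2 - w))"
    by (simp add: mgf_def u_def w_def power2_eq_square mult.assoc)
  ultimately show ?thesis
    using wu by simp
qed

lemma mgf_half_ln2: "mgf_finite (ln 2 / 2) \<and> mgf (ln 2 / 2) < 1"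
proof -
  define t :: real where "t = ln 2 / 2"
  define u where "u = exp (- t)"
  define w where "w = exp (t * log 2 3) * exp (- t)"
  have "u\<^sup>2 = exp (- ln 2)"
    by (simp add: u_def t_def flip: exp_of_nat_mult)
  then have u2: "u\<^sup>2 = 1 / 2"
    by (simp add: exp_minus)
  have "w\<^sup>2 = exp (ln 3 - ln 2)"
    by (simp add: w_def t_def log_def power_mult_distrib algebra_simps flip: exp_of_nat_mult exp_add)
  then have w2: "w\<^sup>2 = 3 / 2"
    by (simp add: exp_diff)
  have "(w * u)\<^sup>2 = w\<^sup>2 * u\<^sup>2"
    by (simp add: power_mult_distrib)
  also have "\<dots> = 3 / 4"
    by (simp only: u2 w2)
  finally have wu2: "(w * u)\<^sup>2 = 3 / 4" .
  have wu: "w * u < 0.87"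
    by (rule power_less_imp_less_base[of _ 2]) (simp_all only: wu2, simp_all add: power2_eq_square)
  have u: "u < 0.71"
    by (rule power_less_imp_less_base[of _ 2]) (simp_all only: u2, simp_all add: power2_eq_square)
  have w: "w < 1.23"
    by (rule power_less_imp_less_base[of _ 2]) (simp_all only: w2, simp_all add: power2_eq_square)
  have "1.29 * 0.77 < (2 - u) * (2 - w)"
    using u w by (intro mult_strict_mono) auto
  then have "w * u < (2 - u) * (2 - w)" and "0 < (2 - u) * (2 - w)"
    using wu u w by simp_all
  then have "w * u / ((2 - u) * (2 - w)) < 1"
    by simp
  moreover have "mgf t = w * u / ((2 - u) * (2 - w))"
    by (simp add: mgf_def u_def w_def power2_eq_square mult.assoc)
  moreover have "mgf_finite t"
    using u w by (simp add: mgf_finite_def u_def w_def)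
  ultimately show ?thesis
    by (simp add: t_def)
qed

lemma I0_eq: "I0 = (SUP t\<in>{t. mgf_finite t}. - ln (mgf t))"
proof -
  have "{t. MX t < \<infinity>} = {t. mgf_finite t}"
    by (auto simp: MX_eq)
  moreover have "enn2real (MX t) = mgf t" if "mgf_finite t" for t
    using that mgf_pos[OF that] by (simp add: MX_eq)
  ultimately show ?thesis
    unfolding I0_def by (intro SUP_cong) auto
qed

lemma bdd_above_neg_ln_mgf: "bdd_above ((\<lambda>t. - ln (mgf t)) ` {t. mgf_finite t})"
proof (rule bdd_aboveI2)
  fix t
  assume "t \<in> {t. mgf_finite t}"
  then have "ln (1 / 8) \<le> ln (mgf t)"
    using mgf_ge_one_eighth mgf_pos by simp
  then show "- ln (mgf t) \<le> ln 8"
    by (simp add: ln_div)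
qed

section \<open>Chernoff weights of residues\<close>

definition cyc_weight :: "real \<Rightarrow> nat \<Rightarrow> nat \<Rightarrow> nat \<Rightarrow> real" where
  "cyc_weight t k D n = (if cyc_val n k < D
     then exp (t * (real (cyc_steps n k) * log 2 3 - real (cyc_val n k))) else 0)"

definition cyc_tail :: "nat \<Rightarrow> nat \<Rightarrow> nat \<Rightarrow> real" where
  "cyc_tail k D n = (if cyc_val n k < D then 0 else 1)"

lemma cyc_weight_nonneg: "0 \<le> cyc_weight t k D n"
  by (simp add: cyc_weight_def)

lemma cyc_tail_nonneg: "0 \<le> cyc_tail k D n"
  by (simp add: cyc_tail_def)

lemma cyc_weight_mod_pow2: "odd x \<Longrightarrow> D \<ge> 1 \<Longrightarrow> cyc_weight t k D (x mod 2 ^ D) = cyc_weight t k D x"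
  using cycles_mod_pow2_trunc by (simp add: cyc_weight_def)

lemma cyc_tail_mod_pow2: "odd x \<Longrightarrow> D \<ge> 1 \<Longrightarrow> cyc_tail k D (x mod 2 ^ D) = cyc_tail k D x"
  using cycles_mod_pow2_trunc by (simp add: cyc_tail_def)

lemma cyc_weight_tail_step:
  assumes "odd \<rho>" and "k \<ge> 1" and "aval \<rho> 0 = a" and "a < D"
  defines "\<sigma> \<equiv> syr \<rho> mod 2 ^ (D - a)"
  shows "cyc_weight t k D \<rho> = exp (t * (log 2 3 - real a)) * cyc_weight t (cycles_after a k) (D - a) \<sigma>"
    and "cyc_tail k D \<rho> = cyc_tail (cycles_after a k) (D - a) \<sigma>"
proof -
  define k' where "k' = cycles_after a k"
  have D: "D - a \<ge> 1"
    using assms(4) by simp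
  have val: "cyc_val \<rho> k = a + cyc_val (syr \<rho>) k'"
    using cyc_val_rec[OF assms(1,2)] by (simp add: assms(3) k'_def)
  have steps: "cyc_steps \<rho> k = Suc (cyc_steps (syr \<rho>) k')"
    using cyc_steps_rec[OF assms(1,2)] by (simp add: assms(3) k'_def)
  have less_iff: "cyc_val \<rho> k < D \<longleftrightarrow> cyc_val (syr \<rho>) k' < D - a"
    using val assms(4) by auto
  have "exp (t * (real (cyc_steps \<rho> k) * log 2 3 - real (cyc_val \<rho> k)))
      = exp (t * (log 2 3 - real a))
        * exp (t * (real (cyc_steps (syr \<rho>) k') * log 2 3 - real (cyc_val (syr \<rho>) k')))"
    unfolding val steps by (simp add: algebra_simps flip: exp_add)
  then have "cyc_weight t k D \<rho> = exp (t * (log 2 3 - real a)) * cyc_weight t k' (D - a) (syr \<rho>)"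
    unfolding cyc_weight_def using less_iff by simp
  then show "cyc_weight t k D \<rho> = exp (t * (log 2 3 - real a)) * cyc_weight t k' (D - a) \<sigma>"
    by (simp add: \<sigma>_def cyc_weight_mod_pow2[OF odd_syr D])
  have "cyc_tail k D \<rho> = cyc_tail k' (D - a) (syr \<rho>)"
    unfolding cyc_tail_def using less_iff by simp
  then show "cyc_tail k D \<rho> = cyc_tail k' (D - a) \<sigma>"
    by (simp add: \<sigma>_def cyc_tail_mod_pow2[OF odd_syr D])
qed

definition weight_sum :: "real \<Rightarrow> nat \<Rightarrow> nat \<Rightarrow> real" where
  "weight_sum t k D = (\<Sum>\<rho>\<in>odd_residues D. cyc_weight t k D \<rho>)"

definition tail_sum :: "nat \<Rightarrow> nat \<Rightarrow> real" where
  "tail_sum k D = (\<Sum>\<rho>\<in>odd_residues D. cyc_tail k D \<rho>)"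

lemma weight_sum_rec:
  assumes "k \<ge> 1" and "D \<ge> 1"
  shows "weight_sum t k D
    \<le> (\<Sum>a\<in>{1..<D}. exp (t * (log 2 3 - real a)) * weight_sum t (cycles_after a k) (D - a))"
proof -
  have "cyc_weight t k D \<rho> = 0" if "\<rho> \<in> odd_residues D" "D \<le> aval \<rho> 0" for \<rho>
    using that aval_le_cyc_val[of \<rho> k] assms(1) by (simp add: cyc_weight_def odd_residues_def)
  then have "weight_sum t k D
      = (\<Sum>a\<in>{1..<D}. \<Sum>\<rho>\<in>{\<rho>\<in>odd_residues D. aval \<rho> 0 = a}. cyc_weight t k D \<rho>)"
    unfolding weight_sum_def sum_residues_by_aval[OF assms(2)] by simp
  also have "\<dots> \<le> (\<Sum>a\<in>{1..<D}. exp (t * (log 2 3 - real a)) * weight_sum t (cycles_after a k) (D - a))"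
  proof (rule sum_mono)
    fix a
    assume a: "a \<in> {1..<D}"
    have "(\<Sum>\<rho>\<in>{\<rho>\<in>odd_residues D. aval \<rho> 0 = a}. cyc_weight t k D \<rho>)
        = exp (t * (log 2 3 - real a))
          * (\<Sum>\<rho>\<in>{\<rho>\<in>odd_residues D. aval \<rho> 0 = a}.
               cyc_weight t (cycles_after a k) (D - a) (syr \<rho> mod 2 ^ (D - a)))"
      using a cyc_weight_tail_step(1)[OF _ assms(1)]
      by (simp add: sum_distrib_left odd_residues_def)
    also have "\<dots> \<le> exp (t * (log 2 3 - real a)) * weight_sum t (cycles_after a k) (D - a)"
      unfolding weight_sum_def using a
      by (intro mult_left_mono sum_residues_syr_le cyc_weight_nonneg) simp_all
    finally show "(\<Sum>\<rho>\<in>{\<rho>\<in>odd_residues D. aval \<rho> 0 = a}. cyc_weight t k D \<rho>)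
        \<le> exp (t * (log 2 3 - real a)) * weight_sum t (cycles_after a k) (D - a)" .
  qed
  finally show ?thesis .
qed

lemma tail_sum_rec:
  assumes "k \<ge> 1" and "D \<ge> 1"
  shows "tail_sum k D \<le> 1 + (\<Sum>a\<in>{1..<D}. tail_sum (cycles_after a k) (D - a))"
proof -
  have "(\<Sum>\<rho>\<in>{\<rho>\<in>odd_residues D. D \<le> aval \<rho> 0}. cyc_tail k D \<rho>)
      \<le> real (card {\<rho>\<in>odd_residues D. D \<le> aval \<rho> 0})"
    using sum_bounded_above[of _ "cyc_tail k D" 1] by (simp add: cyc_tail_def)
  also have "\<dots> \<le> 1"
    using card_residues_aval_ge_le_1 by simp
  finally have top: "(\<Sum>\<rho>\<in>{\<rho>\<in>odd_residues D. D \<le> aval \<rho> 0}. cyc_tail k D \<rho>) \<le> 1" .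
  have "(\<Sum>\<rho>\<in>{\<rho>\<in>odd_residues D. aval \<rho> 0 = a}. cyc_tail k D \<rho>) \<le> tail_sum (cycles_after a k) (D - a)"
    if a: "a \<in> {1..<D}" for a
  proof -
    have "(\<Sum>\<rho>\<in>{\<rho>\<in>odd_residues D. aval \<rho> 0 = a}. cyc_tail k D \<rho>)
        = (\<Sum>\<rho>\<in>{\<rho>\<in>odd_residues D. aval \<rho> 0 = a}.
             cyc_tail (cycles_after a k) (D - a) (syr \<rho> mod 2 ^ (D - a)))"
      using a cyc_weight_tail_step(2)[OF _ assms(1)] by (intro sum.cong) (auto simp: odd_residues_def)
    also have "\<dots> \<le> tail_sum (cycles_after a k) (D - a)"
      unfolding tail_sum_def using a by (intro sum_residues_syr_le cyc_tail_nonneg) simp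
    finally show ?thesis .
  qed
  then show ?thesis
    unfolding tail_sum_def sum_residues_by_aval[OF assms(2)] using top
    by (intro add_mono sum_mono) simp_all
qed

lemma weight_recursion_le:
  assumes "mgf_finite t"
  shows "(\<Sum>a\<in>{1..<D}. exp (t * (log 2 3 - real a)) * (2 ^ (D - a) / 2 * mgf t ^ cycles_after a (Suc k)))
    \<le> 2 ^ D / 2 * mgf t ^ Suc k"
proof -
  define E where "E = exp (t * log 2 3)"
  define u where "u = exp (- t)"
  define m where "m = mgf t"
  define C :: real where "C = 2 ^ D / 2 * m ^ k"
  have E: "0 < E" and u: "0 < u" "u < 2" and Eu: "E * u < 2"
    using assms by (simp_all add: E_def u_def mgf_finite_def)
  have m: "m = E * u\<^sup>2 / ((2 - u) * (2 - E * u))" and "0 \<le> m"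
    using assms by (simp_all add: m_def mgf_def E_def u_def mgf_finite_def)
  have "exp (t * (log 2 3 - real a)) * (2 ^ (D - a) / 2 * m ^ cycles_after a (Suc k))
      = (if a = 1 then C * (E * u / 2 * m) else C * E * (u / 2) ^ a)" if "a \<in> {1..<D}" for a
  proof -
    have "exp (t * (log 2 3 - real a)) = E * u ^ a"
      unfolding exp_step_weight E_def u_def ..
    moreover have "(2 :: real) ^ (D - a) = 2 ^ D / 2 ^ a"
      using that by (simp add: power_diff)
    ultimately show ?thesis
      by (simp add: C_def cycles_after_def power_divide algebra_simps)
  qed
  then have "(\<Sum>a\<in>{1..<D}. exp (t * (log 2 3 - real a)) * (2 ^ (D - a) / 2 * m ^ cycles_after a (Suc k)))
      = (\<Sum>a\<in>{1..<D}. if a = 1 then C * (E * u / 2 * m) else C * E * (u / 2) ^ a)"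
    by (rule sum.cong[OF refl])
  also have "\<dots> \<le> C * (E * u / 2 * m) + C * E * ((u / 2)\<^sup>2 / (1 - u / 2))"
    using sum_first_and_geometric_le[where f = "\<lambda>a. if a = 1 then C * (E * u / 2 * m) else C * E * (u / 2) ^ a"
        and q = "u / 2" and c = "C * E" and D = D] E u \<open>0 \<le> m\<close>
    by (simp add: C_def)
  also have "\<dots> = C * (E * u / 2 * m + E * ((u / 2)\<^sup>2 / (1 - u / 2)))"
    by (simp add: algebra_simps)
  also have "\<dots> = C * m"
    using mgf_renewal[OF u(2) Eu, folded m] by simp
  finally show ?thesis
    by (simp add: C_def m_def ac_simps)
qed

lemma weight_sum_bound:
  assumes "mgf_finite t"
  shows "weight_sum t k D \<le> 2 ^ D / 2 * mgf t ^ k"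
proof (induction k arbitrary: D)
  case 0
  have "weight_sum t 0 D \<le> (\<Sum>\<rho>\<in>odd_residues D. 1)"
    unfolding weight_sum_def by (intro sum_mono) (simp add: cyc_weight_def)
  then show ?case
    using card_odd_residues[of D] by simp
next
  case (Suc k)
  show ?case
  proof (induction D rule: less_induct)
    case (less D)
    have "weight_sum t (cycles_after a (Suc k)) (D - a) \<le> 2 ^ (D - a) / 2 * mgf t ^ cycles_after a (Suc k)"
      if "a \<in> {1..<D}" for a
      using less.IH[of "D - 1"] Suc.IH[of "D - a"] that by (cases "a = 1") (simp_all add: cycles_after_def)
    then have "(\<Sum>a\<in>{1..<D}. exp (t * (log 2 3 - real a)) * weight_sum t (cycles_after a (Suc k)) (D - a))
        \<le> (\<Sum>a\<in>{1..<D}. exp (t * (log 2 3 - real a)) * (2 ^ (D - a) / 2 * mgf t ^ cycles_after a (Suc k)))"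
      by (intro sum_mono mult_left_mono) simp_all
    also have "\<dots> \<le> 2 ^ D / 2 * mgf t ^ Suc k"
      by (rule weight_recursion_le[OF assms])
    finally show ?case
      using weight_sum_rec[of "Suc k" D t] mgf_pos[OF assms]
      by (cases "D = 0") (simp_all add: weight_sum_def)
  qed
qed

lemma tail_recursion_le:
  "1 + (\<Sum>a\<in>{1..<D}. 5 ^ (cycles_after a (Suc k) + 1) * (3 / 2 :: real) ^ (D - a))
    \<le> 5 ^ (Suc k + 1) * (3 / 2) ^ D"
proof -
  define C :: real where "C = 5 ^ (k + 1) * (3 / 2) ^ D"
  have "5 ^ (cycles_after a (Suc k) + 1) * (3 / 2 :: real) ^ (D - a)
      = C * (if a = 1 then 10 / 3 else (2 / 3) ^ a)" if "a \<in> {1..<D}" for a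
  proof -
    have "(3 / 2 :: real) ^ (D - a) = (3 / 2) ^ D * (2 / 3) ^ a"
      using that by (simp add: power_diff power_divide)
    then show ?thesis
      by (simp add: C_def cycles_after_def)
  qed
  then have "(\<Sum>a\<in>{1..<D}. 5 ^ (cycles_after a (Suc k) + 1) * (3 / 2 :: real) ^ (D - a))
      = (\<Sum>a\<in>{1..<D}. C * (if a = 1 then 10 / 3 else (2 / 3) ^ a))"
    by (rule sum.cong[OF refl])
  also have "\<dots> \<le> C * (10 / 3) + C * ((2 / 3)\<^sup>2 / (1 - 2 / 3))"
    using sum_first_and_geometric_le[where f = "\<lambda>a. C * (if a = 1 then 10 / 3 else (2 / 3) ^ a)"
        and q = "2 / 3" and c = C and D = D]
    by (simp add: C_def)
  finally have "1 + (\<Sum>a\<in>{1..<D}. 5 ^ (cycles_after a (Suc k) + 1) * (3 / 2 :: real) ^ (D - a))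
      \<le> 1 + C * (14 / 3)"
    by (simp add: power2_eq_square)
  moreover have "(5 :: real) * 1 \<le> 5 ^ (k + 1) * (3 / 2) ^ D"
    using one_le_power[of "3 / 2 :: real" D] power_increasing[of 1 "k + 1" "5 :: real"]
    by (intro mult_mono) simp_all
  ultimately show ?thesis
    by (simp add: C_def)
qed

lemma tail_sum_bound: "tail_sum k D \<le> 5 ^ (k + 1) * (3 / 2) ^ D"
proof (induction k arbitrary: D)
  case 0
  have "cyc_tail 0 D \<rho> = 0" if "\<rho> \<in> odd_residues D" for \<rho>
    using that by (cases D) (auto simp: cyc_tail_def odd_residues_def)
  then show ?case
    by (simp add: tail_sum_def)
next
  case (Suc k)
  show ?case
  proof (induction D rule: less_induct)
    case (less D)
    have "tail_sum (cycles_after a (Suc k)) (D - a) \<le> 5 ^ (cycles_after a (Suc k) + 1) * (3 / 2) ^ (D - a)"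
      if "a \<in> {1..<D}" for a
      using less.IH[of "D - 1"] Suc.IH[of "D - a"] that by (cases "a = 1") (simp_all add: cycles_after_def)
    then have "1 + (\<Sum>a\<in>{1..<D}. tail_sum (cycles_after a (Suc k)) (D - a))
        \<le> 1 + (\<Sum>a\<in>{1..<D}. 5 ^ (cycles_after a (Suc k) + 1) * (3 / 2 :: real) ^ (D - a))"
      by (intro add_left_mono sum_mono) simp
    also have "\<dots> \<le> 5 ^ (Suc k + 1) * (3 / 2) ^ D"
      by (rule tail_recursion_le)
    finally show ?case
      using tail_sum_rec[of "Suc k" D] by (cases "D = 0") (simp_all add: tail_sum_def)
  qed
qed

section \<open>Upper densities\<close>

lemma upper_density_odd_le:
  assumes "\<And>N. real (card {n\<in>A. odd n \<and> n \<le> N}) \<le> real N * L + C"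
  shows "upper_density_odd A \<le> ereal (2 * L)"
proof -
  have "real (card {n\<in>A. odd n \<and> n \<le> N}) / real (card {n. odd n \<and> n \<le> N}) \<le> 2 * L + 2 * C / real N"
    if "N \<ge> 1" for N
  proof -
    have "real (card {n\<in>A. odd n \<and> n \<le> N}) / real (card {n. odd n \<and> n \<le> N}) \<le> (real N * L + C) / (real N / 2)"
      using assms[of N] card_odd_atMost_ge[of N] that by (intro frac_le) simp_all
    also have "\<dots> = 2 * L + 2 * C / real N"
      using that by (simp add: field_simps)
    finally show ?thesis .
  qed
  then have "eventually (\<lambda>N. ereal (real (card {n\<in>A. odd n \<and> n \<le> N}) / real (card {n. odd n \<and> n \<le> N}))
      \<le> ereal (2 * L + 2 * C / real N)) sequentially"
    unfolding eventually_sequentially by auto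
  then have "upper_density_odd A \<le> limsup (\<lambda>N. ereal (2 * L + 2 * C / real N))"
    unfolding upper_density_odd_def by (rule Limsup_mono)
  also have "(\<lambda>N. ereal (2 * L + 2 * C / real N)) \<longlonglongrightarrow> ereal (2 * L + 0)"
    unfolding lim_ereal by (intro tendsto_add tendsto_const lim_const_over_n)
  then have "limsup (\<lambda>N. ereal (2 * L + 2 * C / real N)) = ereal (2 * L)"
    by (simp add: lim_imp_Limsup)
  finally show ?thesis .
qed

lemma upper_density_odd_nonneg: "0 \<le> upper_density_odd A"
proof -
  have "limsup (\<lambda>N. 0) \<le> upper_density_odd A"
    unfolding upper_density_odd_def by (intro Limsup_mono) simp
  then show ?thesis
    by (simp add: Limsup_const)
qed

lemma upper_density_odd_mono:
  assumes "A \<subseteq> B"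
  shows "upper_density_odd A \<le> upper_density_odd B"
  unfolding upper_density_odd_def
proof (intro Limsup_mono always_eventually allI)
  fix N
  have "finite {n\<in>B. odd n \<and> n \<le> N}"
    by (rule finite_subset[of _ "{..N}"]) auto
  then have "card {n\<in>A. odd n \<and> n \<le> N} \<le> card {n\<in>B. odd n \<and> n \<le> N}"
    using assms by (intro card_mono) auto
  then show "ereal (real (card {n\<in>A. odd n \<and> n \<le> N}) / real (card {n. odd n \<and> n \<le> N}))
      \<le> ereal (real (card {n\<in>B. odd n \<and> n \<le> N}) / real (card {n. odd n \<and> n \<le> N}))"
    by (simp add: divide_right_mono)
qed

lemma upper_density_odd_le_1: "upper_density_odd A \<le> 1"
proof -
  have "real (card {n\<in>A. odd n \<and> n \<le> N}) \<le> real N * (1 / 2) + 1" for N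
  proof -
    have "{n\<in>A. odd n \<and> n \<le> N} \<subseteq> {n. n < Suc N \<and> odd n}"
      by auto
    then have "card {n\<in>A. odd n \<and> n \<le> N} \<le> Suc N div 2"
      using card_mono[of "{n. n < Suc N \<and> odd n}"] by (simp add: card_odd_less)
    then show ?thesis
      by linarith
  qed
  then show ?thesis
    using upper_density_odd_le[of A "1 / 2" 1] by (simp add: one_ereal_def)
qed

text \<open>If the orbit has not decreased after $K$ steps with total valuation $A < D$, then
  either $3^K \<ge> 2^A$, which makes the weight at least $1$, or $n \<le> K 3^K 2^A \<le> D 6^D$.\<close>
lemma one_le_cyc_weight_tail:
  assumes "odd n" and "n \<le> after_cycles n k" and "0 \<le> t" and "D * 6 ^ D < n"
  shows "1 \<le> cyc_weight t k D n + cyc_tail k D n"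
proof (cases "cyc_val n k < D")
  case True
  define K where "K = cyc_steps n k"
  define A where "A = cyc_val n k"
  show ?thesis
  proof (cases "(2::nat) ^ A \<le> 3 ^ K")
    case True
    then have "log 2 (2 ^ A) \<le> log 2 (3 ^ K)"
      by (intro log_mono) (simp_all, metis of_nat_le_iff of_nat_numeral of_nat_power)
    then have "0 \<le> t * (real K * log 2 3 - real A)"
      using assms(3) by (simp add: log_nat_power)
    then show ?thesis
      using \<open>cyc_val n k < D\<close> by (simp add: cyc_weight_def cyc_tail_def K_def A_def)
  next
    case False
    have "2 ^ A * n \<le> 2 ^ A * after_cycles n k"
      using assms(2) by simp
    also have "\<dots> \<le> 3 ^ K * n + K * 3 ^ K * 2 ^ A"
      using funpow_syr_le[of n K] by (simp add: after_cycles_def A_def K_def cyc_val_def)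
    finally have "(3 ^ K + 1) * n \<le> 3 ^ K * n + K * 3 ^ K * 2 ^ A"
      using False mult_le_mono1[of "3 ^ K + 1" "2 ^ A" n] by simp
    then have "n \<le> K * 3 ^ K * 2 ^ A"
      by (simp add: algebra_simps)
    also have "\<dots> \<le> D * 3 ^ D * 2 ^ D"
      using cyc_steps_le_cyc_val[OF assms(1), of k] \<open>cyc_val n k < D\<close>
      by (intro mult_le_mono power_increasing) (simp_all add: K_def A_def)
    also have "\<dots> = D * 6 ^ D"
      by (simp add: power_mult_distrib[symmetric])
    finally show ?thesis
      using assms(4) by simp
  qed
qed (simp add: cyc_tail_def cyc_weight_def)

lemma card_Nset_le_sums:
  assumes "0 \<le> t" and "D \<ge> 1"
  shows "real (card {n\<in>Nset k. odd n \<and> n \<le> N})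
    \<le> real (N div 2 ^ D + 1) * (weight_sum t k D + tail_sum k D) + real (D * 6 ^ D + 1)"
proof -
  define S where "S = {n\<in>Nset k. odd n \<and> n \<le> N}"
  define g where "g n = cyc_weight t k D n + cyc_tail k D n" for n
  have g_nonneg: "0 \<le> g n" for n
    by (simp add: g_def cyc_weight_nonneg cyc_tail_nonneg)
  have "finite S"
    by (rule finite_subset[of _ "{..N}"]) (auto simp: S_def)
  have "real (card S) = (\<Sum>n\<in>S. 1)"
    by simp
  also have "\<dots> \<le> (\<Sum>n\<in>S. g n + (if n \<le> D * 6 ^ D then 1 else 0))"
  proof (rule sum_mono)
    fix n
    assume "n \<in> S"
    then show "1 \<le> g n + (if n \<le> D * 6 ^ D then 1 else 0)"
      using one_le_cyc_weight_tail[of n k t D] g_nonneg[of n] assms(1)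
      by (auto simp: S_def Nset_def g_def)
  qed
  also have "\<dots> = (\<Sum>n\<in>S. g n) + real (card {n\<in>S. n \<le> D * 6 ^ D})"
    using \<open>finite S\<close> by (simp add: sum.distrib sum.inter_filter[symmetric])
  also have "(\<Sum>n\<in>S. g n) \<le> (\<Sum>n | odd n \<and> n \<le> N. g n)"
    using g_nonneg by (intro sum_mono2) (auto simp: S_def)
  also have "\<dots> \<le> real (N div 2 ^ D + 1) * (weight_sum t k D + tail_sum k D)"
    using sum_odd_le_periodic[of D g N] assms(2) g_nonneg
    by (simp add: g_def cyc_weight_mod_pow2 cyc_tail_mod_pow2 weight_sum_def tail_sum_def sum.distrib)
  also have "card {n\<in>S. n \<le> D * 6 ^ D} \<le> card {..D * 6 ^ D}"
    by (intro card_mono) auto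
  finally show ?thesis
    by (simp add: S_def)
qed

lemma card_Nset_le:
  fixes k D N :: nat
  assumes "mgf_finite t" and "0 \<le> t" and "D \<ge> 1"
  defines "B \<equiv> 2 ^ D / 2 * mgf t ^ k + 5 ^ (k + 1) * (3 / 2) ^ D"
  shows "real (card {n\<in>Nset k. odd n \<and> n \<le> N})
    \<le> real N * (mgf t ^ k / 2 + 5 ^ (k + 1) * (3 / 4) ^ D) + (B + real (D * 6 ^ D + 1))"
proof -
  have "real (N div 2 ^ D + 1) \<le> real N / 2 ^ D + 1"
    using of_nat_div_le_of_nat[of N "2 ^ D"] by simp
  moreover have "weight_sum t k D + tail_sum k D \<le> B"
    unfolding B_def using weight_sum_bound[OF assms(1)] tail_sum_bound by (rule add_mono)
  moreover have "0 \<le> weight_sum t k D + tail_sum k D"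
    by (simp add: weight_sum_def tail_sum_def cyc_weight_nonneg cyc_tail_nonneg sum_nonneg)
  ultimately have "real (N div 2 ^ D + 1) * (weight_sum t k D + tail_sum k D) \<le> (real N / 2 ^ D + 1) * B"
    by (intro mult_mono) simp_all
  also have "\<dots> = real N * (B / 2 ^ D) + B"
    by (simp add: algebra_simps)
  also have "(3 / 4 :: real) ^ D = ((3 / 2) * (1 / 2)) ^ D"
    by simp
  then have "B / 2 ^ D = mgf t ^ k / 2 + 5 ^ (k + 1) * (3 / 4) ^ D"
    unfolding B_def by (simp only: power_mult_distrib power_one_over) (simp add: field_simps)
  finally show ?thesis
    using card_Nset_le_sums[OF assms(2,3), of k N] by simp
qed

lemma upper_density_Nset_le:
  assumes "mgf_finite t"
  shows "upper_density_odd (Nset k) \<le> ereal (mgf t ^ k)"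
proof (cases "t < 0")
  case True
  then have "1 \<le> mgf t ^ k"
    using one_le_mgf_if_neg[OF assms] by (simp add: one_le_power)
  then show ?thesis
    using upper_density_odd_le_1[of "Nset k"] by (simp add: one_ereal_def order_trans)
next
  case False
  define b where "b D = mgf t ^ k + 2 * 5 ^ (k + 1) * (3 / 4 :: real) ^ D" for D
  have "upper_density_odd (Nset k) \<le> ereal (b D)" if "D \<ge> 1" for D
    using upper_density_odd_le[OF card_Nset_le[OF assms _ that]] False by (simp add: b_def algebra_simps)
  moreover have "b \<longlonglongrightarrow> mgf t ^ k + 2 * 5 ^ (k + 1) * 0"
    unfolding b_def by (intro tendsto_add tendsto_const tendsto_mult LIMSEQ_power_zero) simp
  ultimately show ?thesis
    by (intro tendsto_le[OF trivial_limit_sequentially, of "\<lambda>D. ereal (b D)"] tendsto_const)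
      (auto simp: eventually_sequentially lim_ereal)
qed

theorem mainTheorem2:
  shows "(\<forall>k\<ge>1. upper_density_odd (Nset k) \<le> ereal (exp (- I0 * real k)))
         \<and> upper_density_odd (\<Inter>k\<in>{1..}. Nset k) = 0"
proof
  show "\<forall>k\<ge>1. upper_density_odd (Nset k) \<le> ereal (exp (- I0 * real k))"
    unfolding I0_eq
  proof (intro allI impI)
    fix k :: nat
    assume "k \<ge> 1"
    then show "upper_density_odd (Nset k) \<le> ereal (exp (- (SUP t\<in>{t. mgf_finite t}. - ln (mgf t)) * real k))"
      using mgf_half_ln2 bdd_above_neg_ln_mgf upper_density_Nset_le mgf_pos
      by (intro le_exp_SUP_neg_ln) auto
  qed
  have "upper_density_odd (\<Inter>k\<in>{1..}. Nset k) \<le> ereal (mgf (ln 2 / 2) ^ k)" if "k \<ge> 1" for k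
    using that mgf_half_ln2 by (intro order_trans[OF upper_density_odd_mono upper_density_Nset_le]) auto
  then have "upper_density_odd (\<Inter>k\<in>{1..}. Nset k) \<le> 0"
    using mgf_half_ln2 mgf_pos[of "ln 2 / 2"] by (intro ereal_le_0_if_le_pow[of "mgf (ln 2 / 2)"]) auto
  then show "upper_density_odd (\<Inter>k\<in>{1..}. Nset k) = 0"
    using upper_density_odd_nonneg by (rule antisym)
qed

end
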